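(* There exists a robust constrained Markov decision process $\mathcal{M}=(\mathcal{S},\mathcal{A},\mathcal{P},\{r_i\}_{i=0}^{I},\{d_i\}_{i=1}^{I},\gamma)$ whose duality gap $$\mathscr{D}=\Big[\max_{\pi}\min_{\lambda\ge 0}\mathcal{L}(\pi,\lambda)\Big]-\Big[\min_{\lambda\ge 0}\max_{\pi}\mathcal{L}(\pi,\lambda)\Big]$$ is strictly positive.
   Context: A robust constrained MDP is a tuple $(\mathcal{S},\mathcal{A},\mathcal{P},\{r_i\}_{i=0}^{I},\{d_i\}_{i=1}^{I},\gamma)$ with finite state space $\mathcal{S}$, finite action space $\mathcal{A}$, an uncertainty set $\mathcal{P}$ of transition kernels $P(\cdot\mid s,a)\in\Delta(\mathcal{S})$, reward functions $r_i:\mathcal{S}\times\mathcal{A}\to\mathbb{R}$ ($r_0$ is the objective reward, $r_1,\dots,r_I$ are constraint rewards), thresholds $d_i\in\mathbb{R}$, discount factor $\gamma\in[0,1)$, and a fixed initial state distribution $\mu$. Policies are stationary randomized maps $\pi:\mathcal{S}\to\Delta(\mathcal{A})$. The robust value of $r_i$ is $V_i^\pi(s)=\inf_{P\in\mathcal{P}}\mathbb{E}_{\pi,P}\big[\sum_{t\ge0}\gamma^t r_i(s_t,a_t)\mid s_0=s\big]$ and $V_i^\pi(\mu)=\mathbb{E}_{s\sim\mu}[V_i^\pi(s)]$. The problem is $\max_\pi V_0^\pi(\mu)$ subject to $V_i^\pi(\mu)\ge d_i$ for $i=1,\dots,I$, with Lagrangian $\mathcal{L}(\pi,\lambda)=V_0^\pi(\mu)-\sum_{i=1}^I\lambda_i\big(d_i-V_i^\pi(\mu)\big)$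 for $\lambda=(\lambda_1,\dots,\lambda_I)\ge0$; the max is over all stationary randomized policies. *)

theory Defs
  imports Complex_Main "HOL-Library.Extended_Real"
begin

text \<open>States are {..<nS}, actions are {..<nA} (any finite state/action space is,
up to renaming, of this form).  A transition kernel is P s a s', a stationary randomized
policy is pol s a, rewards are r i s a (i = 0 objective, i = 1..I constraints).\<close>

definition is_kernel :: "nat \<Rightarrow> nat \<Rightarrow> (nat \<Rightarrow> nat \<Rightarrow> nat \<Rightarrow> real) \<Rightarrow> bool" where
  "is_kernel nS nA P \<longleftrightarrow>
     (\<forall>s<nS. \<forall>a<nA. (\<forall>s'<nS. 0 \<le> P s a s') \<and> (\<Sum>s'<nS. P s a s') = 1)"

definition is_policy :: "nat \<Rightarrow> nat \<Rightarrow> (nat \<Rightarrow> nat \<Rightarrow> real) \<Rightarrow> bool" where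
  "is_policy nS nA pol \<longleftrightarrow>
     (\<forall>s<nS. (\<forall>a<nA. 0 \<le> pol s a) \<and> (\<Sum>a<nA. pol s a) = 1)"

definition is_distr :: "nat \<Rightarrow> (nat \<Rightarrow> real) \<Rightarrow> bool" where
  "is_distr nS mu \<longleftrightarrow> (\<forall>s<nS. 0 \<le> mu s) \<and> (\<Sum>s<nS. mu s) = 1"

fun state_dist :: "nat \<Rightarrow> nat \<Rightarrow> (nat \<Rightarrow> nat \<Rightarrow> nat \<Rightarrow> real) \<Rightarrow> (nat \<Rightarrow> nat \<Rightarrow> real)
                    \<Rightarrow> nat \<Rightarrow> nat \<Rightarrow> nat \<Rightarrow> real" where
  "state_dist nS nA P pol s0 0 s = (if s = s0 then 1 else 0)"
| "state_dist nS nA P pol s0 (Suc t) s' =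
     (\<Sum>s<nS. \<Sum>a<nA. state_dist nS nA P pol s0 t s * pol s a * P s a s')"

text \<open>Expected discounted return E_{pol,P}[sum_t gamma^t r(s_t,a_t) | s_0 = s0]
 (by linearity of expectation, computed through the marginals of (s_t,a_t)).\<close>
definition disc_return :: "nat \<Rightarrow> nat \<Rightarrow> real \<Rightarrow> (nat \<Rightarrow> nat \<Rightarrow> nat \<Rightarrow> real)
     \<Rightarrow> (nat \<Rightarrow> nat \<Rightarrow> real) \<Rightarrow> (nat \<Rightarrow> nat \<Rightarrow> real) \<Rightarrow> nat \<Rightarrow> real" where
  "disc_return nS nA \<gamma> P pol r s0 =
     (\<Sum>t. \<gamma> ^ t * (\<Sum>s<nS. \<Sum>a<nA. state_dist nS nA P pol s0 t s * pol s a * r s a))"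

definition robust_value :: "nat \<Rightarrow> nat \<Rightarrow> real \<Rightarrow> (nat \<Rightarrow> nat \<Rightarrow> nat \<Rightarrow> real) set
     \<Rightarrow> (nat \<Rightarrow> nat \<Rightarrow> real) \<Rightarrow> (nat \<Rightarrow> nat \<Rightarrow> real) \<Rightarrow> nat \<Rightarrow> real" where
  "robust_value nS nA \<gamma> \<P> pol r s = (INF P\<in>\<P>. disc_return nS nA \<gamma> P pol r s)"

definition robust_value_mu :: "nat \<Rightarrow> nat \<Rightarrow> real \<Rightarrow> (nat \<Rightarrow> nat \<Rightarrow> nat \<Rightarrow> real) set
     \<Rightarrow> (nat \<Rightarrow> real) \<Rightarrow> (nat \<Rightarrow> nat \<Rightarrow> real) \<Rightarrow> (nat \<Rightarrow> nat \<Rightarrow> real) \<Rightarrow> real" where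
  "robust_value_mu nS nA \<gamma> \<P> mu pol r = (\<Sum>s<nS. mu s * robust_value nS nA \<gamma> \<P> pol r s)"

definition robust_cmdp :: "nat \<Rightarrow> nat \<Rightarrow> (nat \<Rightarrow> nat \<Rightarrow> nat \<Rightarrow> real) set \<Rightarrow> real
     \<Rightarrow> (nat \<Rightarrow> real) \<Rightarrow> bool" where
  "robust_cmdp nS nA \<P> \<gamma> mu \<longleftrightarrow>
     0 < nS \<and> 0 < nA \<and> \<P> \<noteq> {} \<and> (\<forall>P\<in>\<P>. is_kernel nS nA P) \<and>
     0 \<le> \<gamma> \<and> \<gamma> < 1 \<and> is_distr nS mu"

definition lagrangian :: "nat \<Rightarrow> nat \<Rightarrow> (nat \<Rightarrow> nat \<Rightarrow> nat \<Rightarrow> real) set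
     \<Rightarrow> (nat \<Rightarrow> nat \<Rightarrow> nat \<Rightarrow> real) \<Rightarrow> nat \<Rightarrow> (nat \<Rightarrow> real) \<Rightarrow> real \<Rightarrow> (nat \<Rightarrow> real)
     \<Rightarrow> (nat \<Rightarrow> nat \<Rightarrow> real) \<Rightarrow> (nat \<Rightarrow> real) \<Rightarrow> real" where
  "lagrangian nS nA \<P> r I d \<gamma> mu pol lam =
     robust_value_mu nS nA \<gamma> \<P> mu pol (r 0)
     - (\<Sum>i=1..I. lam i * (d i - robust_value_mu nS nA \<gamma> \<P> mu pol (r i)))"

text \<open>Primal (max-min) and dual (min-max) values, in the extended reals
 (the inner infimum is -infinity for infeasible policies).\<close>
definition maxmin_value where
  "maxmin_value nS nA \<P> r I d \<gamma> mu =
     (SUP pol\<in>{pol. is_policy nS nA pol}. INF lam\<in>{lam. \<forall>i\<in>{1..I}. 0 \<le> lam i}.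
        ereal (lagrangian nS nA \<P> r I d \<gamma> mu pol lam))"

definition minmax_value where
  "minmax_value nS nA \<P> r I d \<gamma> mu =
     (INF lam\<in>{lam. \<forall>i\<in>{1..I}. 0 \<le> lam i}. SUP pol\<in>{pol. is_policy nS nA pol}.
        ereal (lagrangian nS nA \<P> r I d \<gamma> mu pol lam))"

end

theory Submission
  imports Defs
begin

(* The counterexample is a two-step decision problem: from state 0 the agent picks an
   action, moves to one of the states 1, 2, 3, picks a second action and is then absorbed in
   the reward-free state 4.  Nature chooses one of two deterministic kernels A and B.  Writing
   x and y for the probabilities of action 0 in states 0 and 1, kernel A drives the robust
   objective value down to gamma x y and kernel B drives the robust constraint value down to
   gamma (1 - x) (1 - y).  With gamma = 1/2 and threshold 1/8 the feasible policies satisfy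
   (1 - x) (1 - y) >= 1/4, hence x y <= 1/4, so the primal value is at most 1/8.  For the
   dual, any multiplier lam is beaten by one of the two pure policies "always 0" and
   "always 1", whose Lagrangians are 1/2 - lam/8 and 3 lam/8; so the dual value is at least
   3/8.  The gap comes from the set of achievable robust value pairs being non-convex. *)

lemma mult_le_compl_mult_add:
  fixes x y :: real
  assumes "0 \<le> x" "x \<le> 1" "0 \<le> y" "y \<le> 1"
  shows "x * y \<le> (1 - x) * y + x"
proof -
  have "x * y \<le> x" "x * y \<le> y"
    using assms by (simp_all add: mult_left_le mult_left_le_one_le)
  then show ?thesis by (simp add: left_diff_distrib)
qed

lemma mult_le_quarter_if_compl_mult_ge_quarter:
  fixes x y :: real
  assumes "0 \<le> x" "0 \<le> y" "x \<le> 1" "y \<le> 1" and "1/4 \<le> (1 - x) * (1 - y)"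
  shows "x * y \<le> 1/4"
proof -
  have "4 * ((1 - x) * (1 - y)) + (x - y)^2 = (2 - (x + y))^2" by algebra
  then have "1 \<le> (2 - (x + y))^2"
    using assms(5) zero_le_power2[of "x - y"] by linarith
  then have "x + y \<le> 1"
    using power_strict_mono[of "2 - (x + y)" 1 2] assms(3,4) by fastforce
  then have "(x + y)^2 \<le> 1"
    using assms(1,2) by (simp add: power_le_one)
  moreover have "4 * (x * y) + (x - y)^2 = (x + y)^2" by algebra
  ultimately show ?thesis
    using zero_le_power2[of "x - y"] by linarith
qed

definition robust_feasible ::
  "nat \<Rightarrow> nat \<Rightarrow> (nat \<Rightarrow> nat \<Rightarrow> nat \<Rightarrow> real) set \<Rightarrow> (nat \<Rightarrow> nat \<Rightarrow> nat \<Rightarrow> real) \<Rightarrow> nat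
     \<Rightarrow> (nat \<Rightarrow> real) \<Rightarrow> real \<Rightarrow> (nat \<Rightarrow> real) \<Rightarrow> (nat \<Rightarrow> nat \<Rightarrow> real) \<Rightarrow> bool" where
  "robust_feasible nS nA \<P> r I d \<gamma> mu pol \<longleftrightarrow>
     (\<forall>i\<in>{1..I}. d i \<le> robust_value_mu nS nA \<gamma> \<P> mu pol (r i))"

lemma INF_lagrangian:
  "(INF lam\<in>{lam. \<forall>i\<in>{1..I}. 0 \<le> lam i}.
      ereal (lagrangian nS nA \<P> r I d \<gamma> mu pol lam)) =
   (if robust_feasible nS nA \<P> r I d \<gamma> mu pol
    then ereal (robust_value_mu nS nA \<gamma> \<P> mu pol (r 0)) else -\<infinity>)"
  (is "(INF lam\<in>?\<Lambda>. ?L lam) = _")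
proof (cases "robust_feasible nS nA \<P> r I d \<gamma> mu pol")
  case True
  have "?L (\<lambda>_. 0) \<le> ?L lam" if "lam \<in> ?\<Lambda>" for lam
  proof -
    have "(\<Sum>i=1..I. lam i * (d i - robust_value_mu nS nA \<gamma> \<P> mu pol (r i))) \<le> 0"
      using True that unfolding robust_feasible_def by (intro sum_nonpos mult_nonneg_nonpos) auto
    then show ?thesis unfolding lagrangian_def by simp
  qed
  then have "(INF lam\<in>?\<Lambda>. ?L lam) = ?L (\<lambda>_. 0)"
    by (intro antisym INF_lower INF_greatest) auto
  then show ?thesis using True unfolding lagrangian_def by simp
next
  case False
  then obtain j where j: "j \<in> {1..I}"
    and violated: "robust_value_mu nS nA \<gamma> \<P> mu pol (r j) < d j"
    unfolding robust_feasible_def by (auto simp: not_le)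
  define c where "c = d j - robust_value_mu nS nA \<gamma> \<P> mu pol (r j)"
  have "0 < c" using violated by (simp add: c_def)
  define V0 where "V0 = robust_value_mu nS nA \<gamma> \<P> mu pol (r 0)"
  have L: "lagrangian nS nA \<P> r I d \<gamma> mu pol (\<lambda>i. if i = j then t else 0) = V0 - t * c" for t
  proof -
    have "(\<Sum>i=1..I. (if i = j then t else 0) * (d i - robust_value_mu nS nA \<gamma> \<P> mu pol (r i))) =
        (\<Sum>i=1..I. if i = j then t * c else 0)"
      unfolding c_def by (rule sum.cong) auto
    then show ?thesis using j unfolding lagrangian_def V0_def by simp
  qed
  have "(INF lam\<in>?\<Lambda>. ?L lam) \<le> ereal B" for B
  proof -
    define t where "t = max 0 ((V0 - B) / c)"
    have "V0 - t * c \<le> B" using \<open>0 < c\<close> by (auto simp: t_def field_simps max_def)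
    moreover have "(\<lambda>i. if i = j then t else 0) \<in> ?\<Lambda>" by (simp add: t_def)
    ultimately show ?thesis by (intro INF_lower2) (auto simp: L)
  qed
  then show ?thesis using False by (metis ereal_bot)
qed

lemma maxmin_value_eq_SUP_feasible:
  "maxmin_value nS nA \<P> r I d \<gamma> mu =
   (SUP pol\<in>{pol. is_policy nS nA pol \<and> robust_feasible nS nA \<P> r I d \<gamma> mu pol}.
      ereal (robust_value_mu nS nA \<gamma> \<P> mu pol (r 0)))"
  (is "_ = ?rhs")
  unfolding maxmin_value_def INF_lagrangian
proof (rule antisym)
  show "(SUP pol\<in>{pol. is_policy nS nA pol}. if robust_feasible nS nA \<P> r I d \<gamma> mu pol
          then ereal (robust_value_mu nS nA \<gamma> \<P> mu pol (r 0)) else -\<infinity>) \<le> ?rhs"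
    by (rule SUP_least) (auto intro: SUP_upper)
qed (rule SUP_mono, auto)

lemma robust_value_pair:
  "robust_value nS nA \<gamma> {P, Q} pol r s =
   min (disc_return nS nA \<gamma> P pol r s) (disc_return nS nA \<gamma> Q pol r s)"
  unfolding robust_value_def by (simp add: cInf_insert inf_min)

lemma robust_value_mu_point_mass:
  assumes "s0 < nS"
  shows "robust_value_mu nS nA \<gamma> \<P> (\<lambda>s. of_bool (s = s0)) pol r =
    robust_value nS nA \<gamma> \<P> pol r s0"
proof -
  have "{..<nS} \<inter> {s. s = s0} = {s0}" using assms by auto
  then show ?thesis unfolding robust_value_mu_def by simp
qed

lemma sum_state_dist_initial:
  assumes "s0 < nS"
  shows "(\<Sum>s<nS. \<Sum>a<nA. state_dist nS nA P pol s0 0 s * g s a) = (\<Sum>a<nA. g s0 a)"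
proof -
  have "(\<Sum>s<nS. \<Sum>a<nA. state_dist nS nA P pol s0 0 s * g s a) =
      (\<Sum>s<nS. if s = s0 then \<Sum>a<nA. g s0 a else 0)"
    by (rule sum.cong) auto
  then show ?thesis using assms by simp
qed

lemma state_dist_one:
  assumes "s0 < nS"
  shows "state_dist nS nA P pol s0 1 s = (\<Sum>a<nA. pol s0 a * P s0 a s)"
  using sum_state_dist_initial[OF assms, of nA P pol "\<lambda>s' a. pol s' a * P s' a s"]
  by (simp add: mult.assoc del: state_dist.simps(1))

lemma state_dist_no_return:
  assumes "\<And>s a. P s a s0 = 0"
  shows "state_dist nS nA P pol s0 (Suc t) s0 = 0"
  by (simp add: assms)

lemma state_dist_absorbed:
  assumes no_return: "\<And>s a. P s a s0 = 0"
    and absorbing: "\<And>s a s'. s \<noteq> s0 \<Longrightarrow> s' \<noteq> z \<Longrightarrow> P s a s' = 0"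
    and "s' \<noteq> z"
  shows "state_dist nS nA P pol s0 (Suc (Suc t)) s' = 0"
proof -
  have "state_dist nS nA P pol s0 (Suc t) s * pol s a * P s a s' = 0" for s a
    using state_dist_no_return[of P s0, OF no_return] absorbing[OF _ \<open>s' \<noteq> z\<close>]
    by (cases "s = s0") auto
  then show ?thesis
    unfolding state_dist.simps(2)[of _ _ _ _ _ "Suc t"] by (simp only: sum.neutral_const)
qed

lemma disc_return_two_stage:
  assumes "s0 < nS"
    and no_return: "\<And>s a. P s a s0 = 0"
    and absorbing: "\<And>s a s'. s \<noteq> s0 \<Longrightarrow> s' \<noteq> z \<Longrightarrow> P s a s' = 0"
    and terminal_reward: "\<And>a. r z a = 0"
  shows "disc_return nS nA \<gamma> P pol r s0 =
     (\<Sum>a<nA. pol s0 a * r s0 a)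
     + \<gamma> * (\<Sum>s<nS. \<Sum>a<nA. (\<Sum>b<nA. pol s0 b * P s0 b s) * pol s a * r s a)"
proof -
  define f where
    "f t = \<gamma> ^ t * (\<Sum>s<nS. \<Sum>a<nA. state_dist nS nA P pol s0 t s * pol s a * r s a)" for t
  have f_vanishes: "f (Suc (Suc t)) = 0" for t
  proof -
    have "state_dist nS nA P pol s0 (Suc (Suc t)) s * pol s a * r s a = 0" for s a
      using state_dist_absorbed[of P s0 z, OF no_return absorbing] terminal_reward
      by (cases "s = z") auto
    then show ?thesis unfolding f_def by (simp only: sum.neutral_const mult_zero_right)
  qed
  have "f t = 0" if "t \<notin> {..<2}" for t
  proof -
    have "t = Suc (Suc (t - 2))" using that by auto
    then show ?thesis using f_vanishes by metis
  qed
  then have "disc_return nS nA \<gamma> P pol r s0 = f 0 + f 1"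
    unfolding disc_return_def f_def[symmetric]
    by (subst suminf_finite[of "{..<2}"]) (auto simp: numeral_2_eq_2)
  also have "f 0 = (\<Sum>a<nA. pol s0 a * r s0 a)"
    using sum_state_dist_initial[OF \<open>s0 < nS\<close>, of nA P pol "\<lambda>s a. pol s a * r s a"]
    unfolding f_def by (simp add: mult.assoc del: state_dist.simps)
  also have "f 1 = \<gamma> * (\<Sum>s<nS. \<Sum>a<nA. (\<Sum>b<nA. pol s0 b * P s0 b s) * pol s a * r s a)"
    unfolding f_def state_dist_one[OF \<open>s0 < nS\<close>] by simp
  finally show ?thesis .
qed

definition det_kernel :: "(nat \<Rightarrow> nat \<Rightarrow> nat) \<Rightarrow> nat \<Rightarrow> nat \<Rightarrow> nat \<Rightarrow> real" where
  "det_kernel next s a s' = of_bool (s' = next s a)"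

lemma is_kernel_det_kernel:
  assumes "\<And>s a. s < nS \<Longrightarrow> a < nA \<Longrightarrow> next s a < nS"
  shows "is_kernel nS nA (det_kernel next)"
  using assms unfolding is_kernel_def det_kernel_def by simp

lemma is_policy_two_actions:
  assumes "is_policy nS 2 pol" and "s < nS"
  shows "pol s 1 = 1 - pol s 0" and "0 \<le> pol s 0" and "pol s 0 \<le> 1"
proof -
  have "pol s 0 + pol s 1 = 1" "0 \<le> pol s 0" "0 \<le> pol s 1"
    using assms unfolding is_policy_def by (auto simp: numeral_2_eq_2)
  then show "pol s 1 = 1 - pol s 0" and "0 \<le> pol s 0" and "pol s 0 \<le> 1" by auto
qed

definition succ_A :: "nat \<Rightarrow> nat \<Rightarrow> nat" where
  "succ_A s a = (if s = 0 then (if a = 0 then 1 else 2) else 4)"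

definition succ_B :: "nat \<Rightarrow> nat \<Rightarrow> nat" where
  "succ_B s a = (if s = 0 then (if a = 0 then 3 else 1) else 4)"

definition gap_kernels :: "(nat \<Rightarrow> nat \<Rightarrow> nat \<Rightarrow> real) set" where
  "gap_kernels = {det_kernel succ_A, det_kernel succ_B}"

definition gap_reward :: "nat \<Rightarrow> nat \<Rightarrow> nat \<Rightarrow> real" where
  "gap_reward i s a =
     (if i = 0 then (if (s = 1 \<and> a = 0) \<or> s = 3 then 1 else 0)
      else (if (s = 1 \<and> a = 1) \<or> s = 2 then 1 else 0))"

definition gap_mu :: "nat \<Rightarrow> real" where
  "gap_mu s = of_bool (s = 0)"

lemma robust_cmdp_gap: "robust_cmdp 5 2 gap_kernels (1/2) gap_mu"
proof -
  have "is_kernel 5 2 (det_kernel succ_A)" "is_kernel 5 2 (det_kernel succ_B)"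
    by (rule is_kernel_det_kernel, simp add: succ_A_def succ_B_def)+
  moreover have "is_distr 5 gap_mu"
    unfolding is_distr_def gap_mu_def by (simp add: lessThan_nat_numeral)
  ultimately show ?thesis unfolding robust_cmdp_def gap_kernels_def by simp
qed

lemma disc_return_gap:
  "disc_return 5 2 \<gamma> (det_kernel succ_A) pol (gap_reward 0) 0 = \<gamma> * (pol 0 0 * pol 1 0)"
  "disc_return 5 2 \<gamma> (det_kernel succ_B) pol (gap_reward 0) 0 =
     \<gamma> * (pol 0 1 * pol 1 0 + pol 0 0 * (pol 3 0 + pol 3 1))"
  "disc_return 5 2 \<gamma> (det_kernel succ_A) pol (gap_reward 1) 0 =
     \<gamma> * (pol 0 0 * pol 1 1 + pol 0 1 * (pol 2 0 + pol 2 1))"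
  "disc_return 5 2 \<gamma> (det_kernel succ_B) pol (gap_reward 1) 0 = \<gamma> * (pol 0 1 * pol 1 1)"
  by (subst disc_return_two_stage[where z = 4];
      simp add: det_kernel_def succ_A_def succ_B_def gap_reward_def eval_nat_numeral algebra_simps)+

lemma robust_value_mu_gap:
  assumes "is_policy 5 2 pol" and "0 \<le> \<gamma>"
  shows "robust_value_mu 5 2 \<gamma> gap_kernels gap_mu pol (gap_reward 0) = \<gamma> * (pol 0 0 * pol 1 0)"
    and "robust_value_mu 5 2 \<gamma> gap_kernels gap_mu pol (gap_reward 1) =
           \<gamma> * ((1 - pol 0 0) * (1 - pol 1 0))"
proof -
  have V: "robust_value_mu 5 2 \<gamma> gap_kernels gap_mu pol r =
      min (disc_return 5 2 \<gamma> (det_kernel succ_A) pol r 0)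
          (disc_return 5 2 \<gamma> (det_kernel succ_B) pol r 0)" for r
    unfolding gap_mu_def gap_kernels_def by (simp add: robust_value_mu_point_mass robust_value_pair)
  have pol: "0 \<le> pol 0 0" "pol 0 0 \<le> 1" "0 \<le> pol 1 0" "pol 1 0 \<le> 1"
    using is_policy_two_actions(2,3)[OF assms(1)] by simp_all
  have pol_compl: "pol 0 1 = 1 - pol 0 0" "pol 1 1 = 1 - pol 1 0"
      "pol 2 1 = 1 - pol 2 0" "pol 3 1 = 1 - pol 3 0"
    using is_policy_two_actions(1)[OF assms(1)] by simp_all
  have "pol 0 0 * pol 1 0 \<le> (1 - pol 0 0) * pol 1 0 + pol 0 0"
    using pol by (intro mult_le_compl_mult_add)
  then show "robust_value_mu 5 2 \<gamma> gap_kernels gap_mu pol (gap_reward 0) = \<gamma> * (pol 0 0 * pol 1 0)"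
    unfolding V disc_return_gap pol_compl using assms(2)
    by (simp add: min_absorb1 mult_left_mono)
  have "(1 - pol 0 0) * (1 - pol 1 0) \<le> pol 0 0 * (1 - pol 1 0) + (1 - pol 0 0)"
    using pol mult_le_compl_mult_add[of "1 - pol 0 0" "1 - pol 1 0"] by simp
  then show "robust_value_mu 5 2 \<gamma> gap_kernels gap_mu pol (gap_reward 1) =
      \<gamma> * ((1 - pol 0 0) * (1 - pol 1 0))"
    unfolding V disc_return_gap pol_compl using assms(2)
    by (simp add: min_absorb2 mult_left_mono)
qed

lemma lagrangian_gap:
  assumes "is_policy 5 2 pol"
  shows "lagrangian 5 2 gap_kernels gap_reward 1 (\<lambda>_. 1/8) (1/2) gap_mu pol lam =
    pol 0 0 * pol 1 0 / 2 - lam 1 * (1/8 - (1 - pol 0 0) * (1 - pol 1 0) / 2)"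
proof -
  have half: "(0::real) \<le> 1/2" by simp
  have "lagrangian 5 2 gap_kernels gap_reward 1 (\<lambda>_. 1/8) (1/2) gap_mu pol lam =
    robust_value_mu 5 2 (1/2) gap_kernels gap_mu pol (gap_reward 0)
    - lam 1 * (1/8 - robust_value_mu 5 2 (1/2) gap_kernels gap_mu pol (gap_reward 1))"
    unfolding lagrangian_def by simp
  also have "\<dots> = pol 0 0 * pol 1 0 / 2 - lam 1 * (1/8 - (1 - pol 0 0) * (1 - pol 1 0) / 2)"
    unfolding robust_value_mu_gap[OF assms half] by simp
  finally show ?thesis .
qed

lemma robust_feasible_gap_iff:
  assumes "is_policy 5 2 pol"
  shows "robust_feasible 5 2 gap_kernels gap_reward 1 (\<lambda>_. 1/8) (1/2) gap_mu pol \<longleftrightarrow>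
    1/4 \<le> (1 - pol 0 0) * (1 - pol 1 0)"
proof -
  have half: "(0::real) \<le> 1/2" by simp
  have "robust_feasible 5 2 gap_kernels gap_reward 1 (\<lambda>_. 1/8) (1/2) gap_mu pol \<longleftrightarrow>
    1/8 \<le> robust_value_mu 5 2 (1/2) gap_kernels gap_mu pol (gap_reward 1)"
    unfolding robust_feasible_def by simp
  also have "\<dots> \<longleftrightarrow> 1/4 \<le> (1 - pol 0 0) * (1 - pol 1 0)"
    unfolding robust_value_mu_gap[OF assms half] by simp
  finally show ?thesis .
qed

lemma maxmin_value_gap_le:
  "maxmin_value 5 2 gap_kernels gap_reward 1 (\<lambda>_. 1/8) (1/2) gap_mu \<le> ereal (1/8)"
  unfolding maxmin_value_eq_SUP_feasible
proof (rule SUP_least, clarify)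
  fix pol assume pol: "is_policy 5 2 pol"
    and "robust_feasible 5 2 gap_kernels gap_reward 1 (\<lambda>_. 1/8) (1/2) gap_mu pol"
  then have "1/4 \<le> (1 - pol 0 0) * (1 - pol 1 0)"
    using robust_feasible_gap_iff[OF pol] by blast
  then have "pol 0 0 * pol 1 0 \<le> 1/4"
    using is_policy_two_actions[OF pol, of 0] is_policy_two_actions[OF pol, of 1]
    by (intro mult_le_quarter_if_compl_mult_ge_quarter) auto
  then show
    "ereal (robust_value_mu 5 2 (1/2) gap_kernels gap_mu pol (gap_reward 0)) \<le> ereal (1/8)"
    using robust_value_mu_gap(1)[OF pol, of "1/2"] by simp
qed

lemma minmax_value_gap_ge:
  "ereal (3/8) \<le> minmax_value 5 2 gap_kernels gap_reward 1 (\<lambda>_. 1/8) (1/2) gap_mu"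
  unfolding minmax_value_def
proof (rule INF_greatest)
  fix lam :: "nat \<Rightarrow> real"
  let ?L =
    "\<lambda>pol. ereal (lagrangian 5 2 gap_kernels gap_reward 1 (\<lambda>_. 1/8) (1/2) gap_mu pol lam)"
  define always :: "nat \<Rightarrow> nat \<Rightarrow> nat \<Rightarrow> real" where "always b s a = of_bool (a = b)" for b s a
  have always: "is_policy 5 2 (always b)" if "b < 2" for b
    using that unfolding is_policy_def always_def by (auto simp: numeral_2_eq_2)
  have "?L (always 0) = 1/2 - lam 1 / 8" "?L (always 1) = 3/8 * lam 1"
    using lagrangian_gap[OF always, of _ lam] by (simp_all add: always_def)
  then have "ereal (3/8) \<le> max (?L (always 0)) (?L (always 1))" by (simp add: max_def)
  also have "\<dots> \<le> (SUP pol\<in>{pol. is_policy 5 2 pol}. ?L pol)"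
    using always[of 0] always[of 1] by (auto intro: SUP_upper)
  finally show "ereal (3/8) \<le> (SUP pol\<in>{pol. is_policy 5 2 pol}. ?L pol)" .
qed

theorem theorem1:
  shows "\<exists>(nS::nat) (nA::nat) (\<P>::(nat \<Rightarrow> nat \<Rightarrow> nat \<Rightarrow> real) set)
           (r::nat \<Rightarrow> nat \<Rightarrow> nat \<Rightarrow> real) (I::nat) (d::nat \<Rightarrow> real) (\<gamma>::real) (mu::nat \<Rightarrow> real).
           robust_cmdp nS nA \<P> \<gamma> mu \<and>
           maxmin_value nS nA \<P> r I d \<gamma> mu < minmax_value nS nA \<P> r I d \<gamma> mu"
proof (intro exI conjI)
  show "robust_cmdp 5 2 gap_kernels (1/2) gap_mu" by (rule robust_cmdp_gap)
  have "maxmin_value 5 2 gap_kernels gap_reward 1 (\<lambda>_. 1/8) (1/2) gap_mu \<le> ereal (1/8)"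
    by (rule maxmin_value_gap_le)
  also have "\<dots> < ereal (3/8)" by simp
  also have "\<dots> \<le> minmax_value 5 2 gap_kernels gap_reward 1 (\<lambda>_. 1/8) (1/2) gap_mu"
    by (rule minmax_value_gap_ge)
  finally show "maxmin_value 5 2 gap_kernels gap_reward 1 (\<lambda>_. 1/8) (1/2) gap_mu
      < minmax_value 5 2 gap_kernels gap_reward 1 (\<lambda>_. 1/8) (1/2) gap_mu" .
qed

end
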